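(* Let $d\ge 2$ and $n\ge 2$ be integers, let $k\ge 0$ be such that $n_k\le n<n_{k+1}$, and let $\lambda(n)=(l_{k+1},l_k,\ldots,l_0)$. Then $$\Delta W(D_{n,d};q)=\sum_{i=0}^k d^iq^{2i+1}+\sum_{i=0}^{k'}d^i(l_i+1)q^{2i+2},$$ where $k'=k-1$ if $n_k\le n<m_k$ and $k'=k$ if $m_k\le n<n_{k+1}$.
   Context: For a connected graph $G$, $W(G;q)=\sum_{\{u,v\}}q^{d(u,v)}$ over unordered pairs of distinct vertices, $d$ the graph distance. The $d$-ary dendrimer $D_{n,d}$ is the tree on vertex set $\{1,\ldots,n\}$ defined inductively: $D_{1,d}$ is the single vertex $1$, and $D_{n,d}$ is obtained from $D_{n-1,d}$ by attaching a new leaf $n$ to the smallest-numbered vertex of $D_{n-1,d}$ having degree $\le d$. Set $\Delta W(D_{n,d};q)=W(D_{n,d};q)-W(D_{n-1,d};q)$. Define $n_k=2+(d+1)\frac{d^k-1}{d-1}$ and $m_k=3+2d\frac{d^k-1}{d-1}$ for $k\ge0$. For a vertex $m$ with $n_k\le m<n_{k+1}$, its label is $\lambda(m)=(l_{k+1},l_k,\ldots,l_0)$ where $0\le l_i<d$ and $\sum_{i=0}^{k+1}l_id^i=m-n_k+(d-1)d^k$ (the base-$d$ digits, possibly with a leading zero). *)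

theory Defs
  imports Complex_Main
begin

(* degree of vertex v in the tree on {1..length ps} whose parent list is ps
   (ps ! (u-1) = parent of vertex u, for 2 <= u <= length ps; entry for vertex 1 is a dummy) *)
definition ddeg :: "nat list \<Rightarrow> nat \<Rightarrow> nat" where
  "ddeg ps v = card {u. 2 \<le> u \<and> u \<le> length ps \<and> ps ! (u - 1) = v}
               + (if 2 \<le> v \<and> v \<le> length ps then 1 else 0)"

(* parent list of the d-ary dendrimer D_{m,d}: vertex m+1 attaches to the smallest
   vertex of D_{m,d} of degree <= d *)
fun dpar :: "nat \<Rightarrow> nat \<Rightarrow> nat list" where
  "dpar d 0 = []"
| "dpar d (Suc m) = (let ps = dpar d m in
     ps @ [if m = 0 then 0 else (LEAST v. 1 \<le> v \<and> v \<le> m \<and> ddeg ps v \<le> d)])"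

definition dadj :: "nat \<Rightarrow> nat \<Rightarrow> nat \<Rightarrow> nat \<Rightarrow> bool" where
  "dadj d n u v = (let ps = dpar d n in
     1 \<le> u \<and> u \<le> n \<and> 1 \<le> v \<and> v \<le> n \<and>
     ((2 \<le> u \<and> ps ! (u - 1) = v) \<or> (2 \<le> v \<and> ps ! (v - 1) = u)))"

definition gdist :: "('a \<Rightarrow> 'a \<Rightarrow> bool) \<Rightarrow> 'a \<Rightarrow> 'a \<Rightarrow> nat" where
  "gdist E u v = (LEAST k. \<exists>p. length p = Suc k \<and> hd p = u \<and> last p = v \<and>
                     (\<forall>i<k. E (p ! i) (p ! Suc i)))"

definition WD :: "nat \<Rightarrow> nat \<Rightarrow> real \<Rightarrow> real" where
  "WD d n q = (\<Sum>(u, v) \<in> {(u, v). 1 \<le> u \<and> u < v \<and> v \<le> n}. q ^ gdist (dadj d n) u v)"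

definition nk :: "nat \<Rightarrow> nat \<Rightarrow> nat" where
  "nk d k = 2 + (d + 1) * ((d ^ k - 1) div (d - 1))"

definition mk :: "nat \<Rightarrow> nat \<Rightarrow> nat" where
  "mk d k = 3 + 2 * d * ((d ^ k - 1) div (d - 1))"

(* i-th base-d digit l_i of the label lambda(m), for n_k <= m < n_{k+1} *)
definition lbl :: "nat \<Rightarrow> nat \<Rightarrow> nat \<Rightarrow> nat \<Rightarrow> nat" where
  "lbl d k m i = ((m - nk d k + (d - 1) * d ^ k) div d ^ i) mod d"

end

theory Submission
  imports Defs
begin

text \<open>The greedy attachment rule makes \<open>D(n, d)\<close> the tree in which vertex 1 has the children
\<open>2, \<dots>, d + 2\<close> and every vertex \<open>v \<ge> 2\<close> has the children \<open>d (v - 1) + 3, \<dots>, d v + 2\<close>; since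
parents carry smaller labels, graph distance is computed by repeatedly replacing the larger
endpoint by its parent. The increment \<open>\<Delta>W\<close> is the distance polynomial \<open>P(n)\<close> of the new leaf
\<open>n\<close> with respect to the vertices \<open>u < n\<close>. Grouping these vertices by their parents gives
\<open>P(n) = q + (l + 1) q\<^sup>2 + d q\<^sup>2 P(p)\<close>, where \<open>p\<close> is the parent of \<open>n\<close> and \<open>l = (n - 3) mod d\<close>.
The map \<open>n \<mapsto> p\<close> sends level \<open>k + 1\<close> onto level \<open>k\<close> and deletes the last digit \<open>l\<close> of the
label, so unrolling the recurrence down to level 0 yields the closed form.\<close>

section \<open>The dendrimer as an explicit tree\<close>

definition dparent :: "nat \<Rightarrow> nat \<Rightarrow> nat" where
  "dparent d u = max 1 ((u + d - 3) div d)"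

lemma dparent_ge_1: "1 \<le> dparent d u"
  by (simp add: dparent_def)

lemma dparent_less:
  assumes "2 \<le> u"
  shows "dparent d u < u"
proof (cases "d = 0")
  case False
  have "u - 1 \<le> d * (u - 1)"
    using False by simp
  moreover have "d * u = d * (u - 1) + d"
    using assms by (cases u) auto
  ultimately have "u + d - 3 < d * u"
    using assms by linarith
  then have "(u + d - 3) div d < u"
    using False by (simp add: div_less_iff_less_mult mult.commute)
  then show ?thesis
    using assms by (simp add: dparent_def)
qed (use assms in \<open>simp add: dparent_def\<close>)

lemma dparent_eq_div:
  assumes "0 < d" "3 \<le> u"
  shows "dparent d u = (u - 3) div d + 1"
proof -
  have "u + d - 3 = u - 3 + d"
    using assms by simp
  then have "(u + d - 3) div d = (u - 3 + d) div d"
    by (simp only:)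
  also have "\<dots> = (u - 3) div d + 1"
    using assms by (intro div_add_self2) simp
  finally show ?thesis
    by (simp add: dparent_def)
qed

lemma dparent_eq_iff:
  assumes "2 \<le> d" "2 \<le> u" "1 \<le> v"
  shows "dparent d u = v \<longleftrightarrow> u \<le> d * v + 2 \<and> (v = 1 \<or> d * v + 3 \<le> u + d)"
proof (cases "u = 2")
  case True
  have "v = 1" if "d * v + 3 \<le> u + d"
  proof (rule ccontr)
    assume "v \<noteq> 1"
    then have "d * 2 \<le> d * v"
      using assms by simp
    then show False
      using that True by linarith
  qed
  with True show ?thesis
    using assms by (auto simp: dparent_def)
next
  case False
  then have "dparent d u = v \<longleftrightarrow> (u - 3) div d = v - 1"
    using assms dparent_eq_div[of d u] by auto
  also have "\<dots> \<longleftrightarrow> v - 1 \<le> (u - 3) div d \<and> (u - 3) div d < v"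
    using assms by auto
  also have "\<dots> \<longleftrightarrow> (v - 1) * d \<le> u - 3 \<and> u - 3 < v * d"
    using assms by (simp add: less_eq_div_iff_mult_less_eq div_less_iff_less_mult)
  finally show ?thesis
    using assms False by (cases v) (auto simp: algebra_simps)
qed


definition parent_list :: "nat \<Rightarrow> nat \<Rightarrow> nat list" where
  "parent_list d m = map (\<lambda>i. if i = 0 then 0 else dparent d (Suc i)) [0..<m]"

lemma length_parent_list [simp]: "length (parent_list d m) = m"
  by (simp add: parent_list_def)

lemma parent_list_nth:
  assumes "0 < i" "i < m"
  shows "parent_list d m ! i = dparent d (Suc i)"
  using assms by (simp add: parent_list_def)

lemma children_dparent:
  assumes "2 \<le> d" "1 \<le> v"
  shows "{u. 2 \<le> u \<and> u \<le> m \<and> dparent d u = v} =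
           {(if v = 1 then 2 else d * v + 3 - d)..min m (d * v + 2)}"
proof (intro set_eqI iffI)
  fix u
  assume "u \<in> {u. 2 \<le> u \<and> u \<le> m \<and> dparent d u = v}"
  then show "u \<in> {(if v = 1 then 2 else d * v + 3 - d)..min m (d * v + 2)}"
    using dparent_eq_iff[OF assms(1) _ assms(2), of u] by auto
next
  fix u
  assume u: "u \<in> {(if v = 1 then 2 else d * v + 3 - d)..min m (d * v + 2)}"
  have "2 \<le> u"
  proof (cases "v = 1")
    case False
    then have "2 * d \<le> d * v"
      using assms by simp
    moreover have "d * v + 3 - d \<le> u"
      using u False by simp
    ultimately show ?thesis
      by linarith
  qed (use u in simp)
  then show "u \<in> {u. 2 \<le> u \<and> u \<le> m \<and> dparent d u = v}"
    using u dparent_eq_iff[OF assms(1) _ assms(2), of u] by auto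
qed

lemma ddeg_parent_list_le_iff:
  assumes "2 \<le> d" "1 \<le> v" "v \<le> m"
  shows "ddeg (parent_list d m) v \<le> d \<longleftrightarrow> m < d * v + 2"
proof -
  have "{u. 2 \<le> u \<and> u \<le> length (parent_list d m) \<and> parent_list d m ! (u - 1) = v} =
          {u. 2 \<le> u \<and> u \<le> m \<and> dparent d u = v}"
    by (auto simp: parent_list_nth)
  then have ddeg: "ddeg (parent_list d m) v =
      Suc (min m (d * v + 2)) - (if v = 1 then 2 else d * v + 3 - d) + (if 2 \<le> v then 1 else 0)"
    using assms by (simp add: ddeg_def children_dparent)
  show ?thesis
  proof (cases "v = 1")
    case True
    then show ?thesis
      using assms unfolding ddeg by (simp add: min_def) arith
  next
    case False
    then have "2 * d \<le> d * v" "2 \<le> v"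
      using assms by simp_all
    moreover have "Suc (min m (D + 2)) - (D + 3 - d) + 1 \<le> d \<longleftrightarrow> m < D + 2" if "2 * d \<le> D" for D
      using that assms(1) by (simp add: min_def) arith
    ultimately show ?thesis
      using False by (simp only: ddeg if_False if_True)
  qed
qed

lemma Least_parent_list:
  assumes "2 \<le> d" "1 \<le> m"
  shows "(LEAST v. 1 \<le> v \<and> v \<le> m \<and> ddeg (parent_list d m) v \<le> d) = dparent d (Suc m)"
proof (rule Least_equality)
  let ?p = "dparent d (Suc m)"
  have p: "Suc m \<le> d * ?p + 2" "?p = 1 \<or> d * ?p + 3 \<le> Suc m + d" "?p < Suc m"
    using dparent_eq_iff[OF assms(1), of "Suc m" ?p] dparent_ge_1 dparent_less[of "Suc m" d] assms
    by auto
  then show "1 \<le> ?p \<and> ?p \<le> m \<and> ddeg (parent_list d m) ?p \<le> d"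
    using ddeg_parent_list_le_iff[OF assms(1) dparent_ge_1] dparent_ge_1 by simp
  fix v
  assume "1 \<le> v \<and> v \<le> m \<and> ddeg (parent_list d m) v \<le> d"
  then have "m < d * v + 2" "1 \<le> v"
    using ddeg_parent_list_le_iff[OF assms(1)] by auto
  with p(2) have "d * ?p < d * Suc v \<or> ?p = 1"
    by auto
  then show "?p \<le> v"
    using \<open>1 \<le> v\<close> by (auto simp del: mult_Suc_right)
qed

lemma dpar_eq_parent_list:
  assumes "2 \<le> d"
  shows "dpar d m = parent_list d m"
proof (induction m)
  case (Suc m)
  have "parent_list d (Suc m) = parent_list d m @ [if m = 0 then 0 else dparent d (Suc m)]"
    by (simp add: parent_list_def)
  then show ?case
    using Suc Least_parent_list[OF assms, of m] by (simp add: Let_def)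
qed (simp add: parent_list_def)

lemma dadj_iff:
  assumes "2 \<le> d"
  shows "dadj d n u v \<longleftrightarrow> 1 \<le> u \<and> u \<le> n \<and> 1 \<le> v \<and> v \<le> n \<and>
    ((2 \<le> u \<and> dparent d u = v) \<or> (2 \<le> v \<and> dparent d v = u))"
  using assms by (auto simp: dadj_def Let_def dpar_eq_parent_list parent_list_nth)

section \<open>Walks and graph distance\<close>

definition has_walk :: "('a \<Rightarrow> 'a \<Rightarrow> bool) \<Rightarrow> 'a \<Rightarrow> 'a \<Rightarrow> nat \<Rightarrow> bool" where
  "has_walk E u v k \<longleftrightarrow> (\<exists>p. length p = Suc k \<and> hd p = u \<and> last p = v \<and>
                              (\<forall>i<k. E (p ! i) (p ! Suc i)))"

lemma gdist_eq_Least_has_walk: "gdist E u v = (LEAST k. has_walk E u v k)"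
  by (simp add: gdist_def has_walk_def)

lemma has_walk_iff_nth:
  "has_walk E u v k \<longleftrightarrow> (\<exists>p. length p = Suc k \<and> p ! 0 = u \<and> p ! k = v \<and>
                                 (\<forall>i<k. E (p ! i) (p ! Suc i)))"
proof -
  have "hd p = p ! 0 \<and> last p = p ! k" if "length p = Suc k" for p :: "'a list"
    using that by (cases p) (auto simp: last_conv_nth)
  then show ?thesis
    unfolding has_walk_def by metis
qed

lemma has_walk_refl: "has_walk E u u 0"
  unfolding has_walk_iff_nth by (intro exI[of _ "[u]"]) simp

lemma has_walk_Cons:
  assumes "E u w" "has_walk E w v k"
  shows "has_walk E u v (Suc k)"
proof -
  obtain p where p: "length p = Suc k" "p ! 0 = w" "p ! k = v" "\<forall>i<k. E (p ! i) (p ! Suc i)"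
    using assms(2) by (auto simp: has_walk_iff_nth)
  have "E ((u # p) ! i) ((u # p) ! Suc i)" if "i < Suc k" for i
    using that assms(1) p by (cases i) auto
  then show ?thesis
    unfolding has_walk_iff_nth using p by (intro exI[of _ "u # p"]) auto
qed

lemma has_walk_snoc:
  assumes "has_walk E u w k" "E w v"
  shows "has_walk E u v (Suc k)"
proof -
  obtain p where p: "length p = Suc k" "p ! 0 = u" "p ! k = w" "\<forall>i<k. E (p ! i) (p ! Suc i)"
    using assms(1) by (auto simp: has_walk_iff_nth)
  have "E ((p @ [v]) ! i) ((p @ [v]) ! Suc i)" if "i < Suc k" for i
    using that assms(2) p by (cases "i < k") (auto simp: nth_append less_Suc_eq)
  moreover have "(p @ [v]) ! 0 = u" "(p @ [v]) ! Suc k = v"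
    using p by (simp_all add: nth_append)
  ultimately show ?thesis
    unfolding has_walk_iff_nth using p(1) by (intro exI[of _ "p @ [v]"]) simp
qed

lemma has_walk_Lipschitz:
  fixes f :: "'a \<Rightarrow> nat"
  assumes "has_walk E u v k" "\<And>x y. E x y \<Longrightarrow> f y \<le> Suc (f x)"
  shows "f v \<le> f u + k"
proof -
  obtain p where p: "length p = Suc k" "p ! 0 = u" "p ! k = v" "\<forall>i<k. E (p ! i) (p ! Suc i)"
    using assms(1) by (auto simp: has_walk_iff_nth)
  have "f (p ! i) \<le> f u + i" if "i \<le> k" for i
    using that
  proof (induction i)
    case (Suc i)
    then show ?case
      using p(4) assms(2)[of "p ! i" "p ! Suc i"] by simp
  qed (simp add: p)
  then show ?thesis
    using p by auto
qed

lemma gdist_eqI: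
  fixes f :: "'a \<Rightarrow> nat"
  assumes "has_walk E u v (f v)" "f u = 0" "\<And>x y. E x y \<Longrightarrow> f y \<le> Suc (f x)"
  shows "gdist E u v = f v"
  unfolding gdist_eq_Least_has_walk
proof (rule Least_equality)
  show "has_walk E u v (f v)"
    by (fact assms(1))
  show "f v \<le> k" if "has_walk E u v k" for k
    using has_walk_Lipschitz[of E u v k f, OF that assms(3)] assms(2) by linarith
qed

function tdist :: "nat \<Rightarrow> nat \<Rightarrow> nat \<Rightarrow> nat" where
  "tdist d u v = (if u = v \<or> u = 0 \<or> v = 0 then 0
     else if v < u then Suc (tdist d (dparent d u) v) else Suc (tdist d u (dparent d v)))"
  by auto
termination
proof (relation "measure (\<lambda>(d, u, v). u + v)")
  fix d u v :: nat
  assume "\<not> (u = v \<or> u = 0 \<or> v = 0)"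
  then show "v < u \<Longrightarrow> ((d, dparent d u, v), d, u, v) \<in> measure (\<lambda>(d, u, v). u + v)"
    and "\<not> v < u \<Longrightarrow> ((d, u, dparent d v), d, u, v) \<in> measure (\<lambda>(d, u, v). u + v)"
    using dparent_less[of u d] dparent_less[of v d] by auto
qed simp

declare tdist.simps [simp del]

lemma tdist_self [simp]: "tdist d u u = 0"
  by (simp add: tdist.simps)

lemma tdist_greater: "1 \<le> v \<Longrightarrow> v < u \<Longrightarrow> tdist d u v = Suc (tdist d (dparent d u) v)"
  by (subst tdist.simps) auto

lemma tdist_less: "1 \<le> u \<Longrightarrow> u < v \<Longrightarrow> tdist d u v = Suc (tdist d u (dparent d v))"
  by (subst tdist.simps) auto

lemma tdist_dparent:
  assumes "2 \<le> w" "1 \<le> u"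
  shows "tdist d u (dparent d w) = Suc (tdist d u w) \<or> tdist d u w = Suc (tdist d u (dparent d w))"
  using assms(2)
proof (induction u rule: less_induct)
  case (less u)
  have w: "dparent d w < w" "1 \<le> dparent d w"
    using dparent_less[OF assms(1)] dparent_ge_1 by auto
  consider "u = w" | "w < u" | "u < w"
    by linarith
  then show ?case
  proof cases
    case 1
    then show ?thesis
      using w tdist_greater[of "dparent d w" w d] by simp
  next
    case 2
    then have "dparent d u < u" "1 \<le> dparent d u"
      using dparent_less[of u d] dparent_ge_1 assms by auto
    then show ?thesis
      using 2 w less.IH[of "dparent d u"] assms
        tdist_greater[of w u d] tdist_greater[of "dparent d w" u d] by auto
  next
    case 3
    then show ?thesis
      using tdist_less[OF less.prems] by simp
  qed
qed

lemma tdist_dadj: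
  assumes "2 \<le> d" "1 \<le> u" "dadj d n v w"
  shows "tdist d u w \<le> Suc (tdist d u v)"
  using assms tdist_dparent[of v u d] tdist_dparent[of w u d] by (auto simp: dadj_iff)

lemma has_walk_tdist:
  assumes "2 \<le> d" "1 \<le> u" "u \<le> n" "1 \<le> v" "v \<le> n"
  shows "has_walk (dadj d n) u v (tdist d u v)"
  using assms(2-5)
proof (induction "u + v" arbitrary: u v rule: less_induct)
  case less
  consider "u = v" | "v < u" | "u < v"
    by linarith
  then show ?case
  proof cases
    case 1
    then show ?thesis
      by (simp add: has_walk_refl)
  next
    case 2
    then have "dparent d u < u" "1 \<le> dparent d u" "dadj d n u (dparent d u)"
      using dparent_less[of u d] dparent_ge_1 less.prems by (auto simp: dadj_iff[OF assms(1)])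
    moreover have "has_walk (dadj d n) (dparent d u) v (tdist d (dparent d u) v)"
      using less.hyps[of "dparent d u" v] less.prems 2 \<open>dparent d u < u\<close> \<open>1 \<le> dparent d u\<close> by simp
    ultimately show ?thesis
      using 2 less.prems tdist_greater[of v u d] by (simp add: has_walk_Cons)
  next
    case 3
    then have "dparent d v < v" "1 \<le> dparent d v" "dadj d n (dparent d v) v"
      using dparent_less[of v d] dparent_ge_1 less.prems by (auto simp: dadj_iff[OF assms(1)])
    moreover have "has_walk (dadj d n) u (dparent d v) (tdist d u (dparent d v))"
      using less.hyps[of u "dparent d v"] less.prems 3 \<open>dparent d v < v\<close> \<open>1 \<le> dparent d v\<close> by simp
    ultimately show ?thesis
      using 3 less.prems tdist_less[of u v d] by (simp add: has_walk_snoc)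
  qed
qed

lemma gdist_dadj:
  assumes "2 \<le> d" "1 \<le> u" "u \<le> n" "1 \<le> v" "v \<le> n"
  shows "gdist (dadj d n) u v = tdist d u v"
  using gdist_eqI[of "dadj d n" u v "tdist d u"] has_walk_tdist[OF assms] tdist_dadj[OF assms(1,2)]
  by simp

section \<open>Distances from the newest vertex\<close>

definition pred_dist_poly :: "nat \<Rightarrow> real \<Rightarrow> nat \<Rightarrow> real" where
  "pred_dist_poly d q n = (\<Sum>u\<in>{1..<n}. q ^ tdist d u n)"

lemma WD_eq_tdist:
  assumes "2 \<le> d"
  shows "WD d n q = (\<Sum>(u, v) \<in> {(u, v). 1 \<le> u \<and> u < v \<and> v \<le> n}. q ^ tdist d u v)"
  unfolding WD_def by (rule sum.cong) (auto simp: gdist_dadj[OF assms])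

lemma WD_diff_eq_pred_dist_poly:
  assumes "2 \<le> d" "1 \<le> n"
  shows "WD d n q - WD d (n - 1) q = pred_dist_poly d q n"
proof -
  let ?P = "\<lambda>n::nat. {(u, v). 1 \<le> u \<and> u < v \<and> v \<le> n}"
  have "?P n = ?P (n - 1) \<union> (\<lambda>u. (u, n)) ` {1..<n}" "?P (n - 1) \<inter> (\<lambda>u. (u, n)) ` {1..<n} = {}"
    using assms(2) by auto
  moreover have "finite (?P m)" for m
    by (rule finite_subset[of _ "{0..m} \<times> {0..m}"]) auto
  ultimately have "WD d n q = WD d (n - 1) q + (\<Sum>(u, v) \<in> (\<lambda>u. (u, n)) ` {1..<n}. q ^ tdist d u v)"
    unfolding WD_eq_tdist[OF assms(1)] by (simp add: sum.union_disjoint)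
  also have "(\<Sum>(u, v) \<in> (\<lambda>u. (u, n)) ` {1..<n}. q ^ tdist d u v) = pred_dist_poly d q n"
    unfolding pred_dist_poly_def by (simp add: sum.reindex inj_on_def)
  finally show ?thesis
    by simp
qed

lemma sum_tdist_before:
  fixes q :: real
  assumes "2 \<le> v" "m \<le> v"
  shows "(\<Sum>u\<in>{1..<m}. q ^ tdist d u v) = q * (\<Sum>u\<in>{1..<m}. q ^ tdist d u (dparent d v))"
proof -
  have "tdist d u v = Suc (tdist d u (dparent d v))" if "u \<in> {1..<m}" for u
    using that assms by (simp add: tdist_less)
  then have "(\<Sum>u\<in>{1..<m}. q ^ tdist d u v) = (\<Sum>u\<in>{1..<m}. q * q ^ tdist d u (dparent d v))"
    by (intro sum.cong) simp_all
  then show ?thesis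
    by (simp add: sum_distrib_left)
qed

lemma sum_dparent_blocks:
  assumes "2 \<le> d" "1 \<le> a" "a \<le> b"
  shows "(\<Sum>u\<in>{d * a + 3..<d * b + 3}. f (dparent d u)) = real d * (\<Sum>w\<in>{Suc a..<Suc b}. f w)"
  using assms(3)
proof (induction b rule: nat_induct_at_least)
  case (Suc b)
  have "dparent d u = Suc b" if "u \<in> {d * b + 3..<d * Suc b + 3}" for u
    using that assms dparent_eq_iff[OF assms(1), of u "Suc b"] Suc.hyps by auto
  then have "(\<Sum>u\<in>{d * b + 3..<d * Suc b + 3}. f (dparent d u)) = real d * f (Suc b)"
    by simp
  moreover have "d * a + 3 \<le> d * b + 3"
    using Suc.hyps by simp
  ultimately have "(\<Sum>u\<in>{d * a + 3..<d * Suc b + 3}. f (dparent d u)) =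
      real d * (\<Sum>w\<in>{Suc a..<Suc b}. f w) + real d * f (Suc b)"
    using Suc.IH sum.atLeastLessThan_concat[of "d * a + 3" "d * b + 3" "d * Suc b + 3"
        "\<lambda>u. f (dparent d u)"] by simp
  also have "\<dots> = real d * (\<Sum>w\<in>{Suc a..<Suc (Suc b)}. f w)"
    using Suc.hyps by (simp add: algebra_simps)
  finally show ?case .
qed simp

text \<open>The vertices strictly between \<open>p\<close> and its child \<open>n\<close> are the younger siblings of \<open>p\<close>, the
children of the vertices strictly between the grandparent and \<open>p\<close>, and the elder siblings of \<open>n\<close>.\<close>

lemma sum_dparent_between:
  fixes f :: "nat \<Rightarrow> real"
  assumes d: "2 \<le> d" and n: "2 \<le> n" and p: "dparent d n = p" "2 \<le> p"
  shows "(\<Sum>u\<in>{Suc p..<n}. f (dparent d u)) =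
    real (d * dparent d p + 2 - p) * f (dparent d p) + real d * (\<Sum>w\<in>{Suc (dparent d p)..<p}. f w)
    + real (n + d - 3 - d * p) * f p"
proof -
  define pp where "pp = dparent d p"
  obtain r where r: "p = Suc r"
    using p(2) by (cases p) auto
  have np: "n \<le> d * p + 2" "d * p + 3 \<le> n + d"
    using dparent_eq_iff[OF d n, of p] p by auto
  have pp: "pp < p" "1 \<le> pp" "p \<le> d * pp + 2" "pp = 1 \<or> d * pp + 3 \<le> p + d"
    using dparent_less[OF p(2), of d] dparent_ge_1 dparent_eq_iff[OF d p(2) dparent_ge_1]
    unfolding pp_def by auto
  have le: "Suc p \<le> d * pp + 3" "d * pp + 3 \<le> d * r + 3" "d * r + 3 \<le> n"
    using pp np r by simp_all
  have siblings: "(\<Sum>u\<in>{Suc p..<d * pp + 3}. f (dparent d u)) = real (d * pp + 2 - p) * f pp"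
  proof -
    have "dparent d u = pp" if "u \<in> {Suc p..<d * pp + 3}" for u
      using that pp p(2) dparent_eq_iff[OF d _ pp(2), of u] by auto
    then show ?thesis
      by simp
  qed
  have cousins: "(\<Sum>u\<in>{d * pp + 3..<d * r + 3}. f (dparent d u)) = real d * (\<Sum>w\<in>{Suc pp..<p}. f w)"
    using sum_dparent_blocks[OF d pp(2), of r f] pp r by simp
  have children: "(\<Sum>u\<in>{d * r + 3..<n}. f (dparent d u)) = real (n + d - 3 - d * p) * f p"
  proof -
    have "dparent d u = p" if "u \<in> {d * r + 3..<n}" for u
      using that np r p(2) dparent_eq_iff[OF d _ , of u p] by auto
    moreover have "n - (d * r + 3) = n + d - 3 - d * p"
      using r by simp
    ultimately show ?thesis
      by simp
  qed
  show ?thesis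
    using sum.atLeastLessThan_concat[OF le(1,2), of "\<lambda>u. f (dparent d u)"]
      sum.atLeastLessThan_concat[OF order_trans[OF le(1,2)] le(3), of "\<lambda>u. f (dparent d u)"]
      siblings cousins children
    unfolding pp_def by simp
qed

lemma pred_dist_poly_via_parent:
  fixes q :: real
  assumes d: "2 \<le> d" and n: "2 \<le> n" and p: "dparent d n = p" "2 \<le> p"
  shows "pred_dist_poly d q n = q * (pred_dist_poly d q p + 1 + q * (real (d * dparent d p + 2 - p) * q
    + real d * (pred_dist_poly d q p - q * (pred_dist_poly d q (dparent d p) + 1)) + real (n + d - 3 - d * p)))"
proof -
  define pp where "pp = dparent d p"
  have pp: "pp < p" "1 \<le> pp"
    using dparent_less[OF p(2), of d] dparent_ge_1 unfolding pp_def by auto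
  let ?g = "\<lambda>w. q ^ tdist d w p"
  have "p < n"
    using dparent_less[OF n, of d] p by simp
  have "pred_dist_poly d q n = q * (\<Sum>u\<in>{1..<n}. ?g u)"
    using sum_tdist_before[of n n q d] n p(1) unfolding pred_dist_poly_def by simp
  also have "\<dots> = q * (pred_dist_poly d q p + (\<Sum>u\<in>{p..<n}. ?g u))"
    using \<open>p < n\<close> p(2) unfolding pred_dist_poly_def by (simp add: sum.atLeastLessThan_concat)
  also have "(\<Sum>u\<in>{p..<n}. ?g u) = 1 + q * (\<Sum>u\<in>{Suc p..<n}. ?g (dparent d u))"
    using \<open>p < n\<close> p(2) by (simp add: sum.atLeast_Suc_lessThan sum_distrib_left tdist_greater)
  finally have "pred_dist_poly d q n =
      q * (pred_dist_poly d q p + 1 + q * (\<Sum>u\<in>{Suc p..<n}. ?g (dparent d u)))"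
    by (simp add: algebra_simps)
  moreover have "?g pp = q"
    using pp tdist_less[of pp p d] unfolding pp_def by simp
  moreover have "(\<Sum>w\<in>{Suc pp..<p}. ?g w) = pred_dist_poly d q p - q * (pred_dist_poly d q pp + 1)"
  proof -
    have "(\<Sum>w\<in>{1..<p}. ?g w) = (\<Sum>w\<in>{1..<Suc pp}. ?g w) + (\<Sum>w\<in>{Suc pp..<p}. ?g w)"
      using pp by (intro sum.atLeastLessThan_concat[symmetric]) simp_all
    moreover have "(\<Sum>w\<in>{1..<Suc pp}. ?g w) = q * (pred_dist_poly d q pp + 1)"
      using sum_tdist_before[of p "Suc pp" q d] pp p(2) unfolding pp_def pred_dist_poly_def by simp
    ultimately show ?thesis
      unfolding pred_dist_poly_def by simp
  qed
  ultimately show ?thesis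
    using sum_dparent_between[OF d n p, of ?g] unfolding pp_def by simp
qed

lemma pred_dist_poly_child_of_root:
  fixes q :: real
  assumes d: "2 \<le> d" and n: "2 \<le> n" "dparent d n = 1"
  shows "pred_dist_poly d q n = q + real (n - 2) * q\<^sup>2"
proof -
  have "n \<le> d + 2"
    using dparent_eq_iff[OF d n(1), of 1] n by simp
  then have "tdist d u 1 = 1" if "u \<in> {2..<n}" for u
    using that tdist_greater[of 1 u d] dparent_eq_iff[OF d _, of u 1] by simp
  then have "(\<Sum>u\<in>{2..<n}. q ^ tdist d u 1) = real (n - 2) * q"
    by simp
  moreover have "(\<Sum>u\<in>{1..<n}. q ^ tdist d u 1) = 1 + (\<Sum>u\<in>{2..<n}. q ^ tdist d u 1)"
    using n by (simp add: sum.atLeast_Suc_lessThan numeral_2_eq_2)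
  moreover have "pred_dist_poly d q n = q * (\<Sum>u\<in>{1..<n}. q ^ tdist d u 1)"
    using sum_tdist_before[of n n q d] n unfolding pred_dist_poly_def by simp
  ultimately have "pred_dist_poly d q n = q * (1 + real (n - 2) * q)"
    by simp
  then show ?thesis
    by (simp add: power2_eq_square algebra_simps)
qed

lemma pred_dist_poly_rec:
  fixes q :: real
  assumes d: "2 \<le> d" and "2 \<le> n"
  shows "pred_dist_poly d q n =
    q + real (n + d - 2 - d * dparent d n) * q\<^sup>2 + real d * q\<^sup>2 * pred_dist_poly d q (dparent d n)"
  using assms(2)
proof (induction n rule: less_induct)
  case (less n)
  define p where "p = dparent d n"
  show ?case
  proof (cases "p = 1")
    case True
    then show ?thesis
      using pred_dist_poly_child_of_root[OF d less.prems, of q] unfolding p_def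
      by (simp add: pred_dist_poly_def)
  next
    case False
    define pp where "pp = dparent d p"
    have p: "2 \<le> p" "p < n" "d * p + 3 \<le> n + d"
      using False dparent_ge_1[of d n] dparent_less[OF less.prems, of d]
        dparent_eq_iff[OF d less.prems, of p] unfolding p_def by auto
    have "p \<le> d * pp + 2" "pp = 1 \<or> d * pp + 3 \<le> p + d"
      using dparent_eq_iff[OF d p(1) dparent_ge_1[of d p]] unfolding pp_def by auto
    then have pp: "p \<le> d * pp + 2" "d * pp + 2 \<le> p + d"
      using p(1) by auto
    then have casts: "real (p + d - 2 - d * pp) = real p + real d - 2 - real d * real pp"
      "real (d * pp + 2 - p) = real d * real pp + 2 - real p"
      "real (n + d - 3 - d * p) = real n + real d - 3 - real d * real p"
      "real (n + d - 2 - d * p) = real n + real d - 2 - real d * real p"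
      using p by simp_all
    have IH: "pred_dist_poly d q p = q + (real p + real d - 2 - real d * real pp) * q\<^sup>2
        + real d * q\<^sup>2 * pred_dist_poly d q pp"
      using less.IH[OF p(2,1)] unfolding pp_def[symmetric] casts(1) .
    have "pred_dist_poly d q n = q * (pred_dist_poly d q p + 1 + q * ((real d * real pp + 2 - real p) * q
        + real d * (pred_dist_poly d q p - q * (pred_dist_poly d q pp + 1))
        + (real n + real d - 3 - real d * real p)))"
      using pred_dist_poly_via_parent[OF d less.prems p_def[symmetric] p(1)]
      unfolding pp_def[symmetric] casts(2,3) .
    \<comment> \<open>the grandparent's term \<open>pred_dist_poly d q pp\<close> cancels against the recurrence for \<open>p\<close>\<close>
    then have "pred_dist_poly d q n = q + (real n + real d - 2 - real d * real p) * q\<^sup>2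
        + real d * q\<^sup>2 * pred_dist_poly d q p"
      unfolding IH by (simp add: power2_eq_square algebra_simps)
    then show ?thesis
      unfolding p_def[symmetric] casts(4) .
  qed
qed

section \<open>Levels and labels\<close>

lemma geometric_div_nat:
  fixes d :: nat
  assumes "2 \<le> d"
  shows "(d ^ k - 1) div (d - 1) = (\<Sum>i<k. d ^ i)"
proof -
  have "int (d ^ k - 1) = int (d - 1) * int (\<Sum>i<k. d ^ i)"
    using assms power_diff_1_eq[of "int d" k] by simp
  then have "d ^ k - 1 = (d - 1) * (\<Sum>i<k. d ^ i)"
    by (simp only: of_nat_mult[symmetric] of_nat_eq_iff)
  then show ?thesis
    using assms by simp
qed

lemma sum_power_lessThan_Suc:
  fixes d :: "'a :: comm_semiring_1"
  shows "(\<Sum>i<Suc k. d ^ i) = 1 + d * (\<Sum>i<k. d ^ i)"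
  by (simp only: sum.lessThan_Suc_shift power_0 power_Suc sum_distrib_left)

lemma nk_Suc:
  assumes "2 \<le> d"
  shows "nk d (Suc k) + d = d * nk d k + 3"
  unfolding nk_def geometric_div_nat[OF assms] sum_power_lessThan_Suc by (simp add: algebra_simps)

lemma mk_Suc:
  assumes "2 \<le> d"
  shows "mk d (Suc k) + d = d * mk d k + 3"
  unfolding mk_def geometric_div_nat[OF assms] sum_power_lessThan_Suc by (simp add: algebra_simps)

lemma dparent_less_iff:
  assumes "0 < d" "3 \<le> n"
  shows "dparent d n < c \<longleftrightarrow> n + d < d * c + 3"
proof (cases c)
  case (Suc c')
  have "dparent d n < c \<longleftrightarrow> (n - 3) div d < c'"
    using assms Suc by (simp add: dparent_eq_div)
  also have "\<dots> \<longleftrightarrow> n - 3 < c' * d"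
    using assms by (simp add: div_less_iff_less_mult)
  finally show ?thesis
    using assms Suc by (auto simp: algebra_simps)
qed (use assms in simp)

lemma dparent_mult_add_mod:
  assumes "0 < d" "3 \<le> n"
  shows "d * dparent d n + (n - 3) mod d = n + d - 3"
  using assms div_mult_mod_eq[of "n - 3" d] by (simp add: dparent_eq_div algebra_simps)

lemma nk_ge_2: "2 \<le> nk d k"
  by (simp add: nk_def)

lemma nk_Suc_ge:
  assumes "2 \<le> d"
  shows "d + 3 \<le> nk d (Suc k)"
proof -
  have "d * 2 \<le> d * nk d k"
    using nk_ge_2[of d k] by (rule mult_le_mono2)
  then show ?thesis
    using nk_Suc[OF assms, of k] by linarith
qed

lemma nk_le_dparent:
  assumes "2 \<le> d" "nk d (Suc k) \<le> n"
  shows "nk d k \<le> dparent d n"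
  using assms dparent_less_iff[of d n "nk d k"] nk_Suc[of d k] nk_Suc_ge[of d k] by simp

lemma dparent_less_nk:
  assumes "2 \<le> d" "nk d (Suc k) \<le> n" "n < nk d (Suc (Suc k))"
  shows "dparent d n < nk d (Suc k)"
  using assms dparent_less_iff[of d n "nk d (Suc k)"] nk_Suc[of d "Suc k"] nk_Suc_ge[of d k] by simp

lemma dparent_less_mk_iff:
  assumes "2 \<le> d" "nk d (Suc k) \<le> n"
  shows "dparent d n < mk d k \<longleftrightarrow> n < mk d (Suc k)"
  using assms dparent_less_iff[of d n "mk d k"] nk_Suc_ge[of d k] by (simp add: mk_Suc[symmetric])

lemma lbl_offset_Suc:
  assumes "2 \<le> d" "nk d (Suc k) \<le> n"
  shows "n - nk d (Suc k) + (d - 1) * d ^ Suc k =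
    d * (dparent d n - nk d k + (d - 1) * d ^ k) + (n - 3) mod d"
proof -
  have "nk d k \<le> dparent d n" "3 \<le> n"
    using nk_le_dparent[OF assms] nk_Suc_ge[OF assms(1), of k] assms(2) by simp_all
  then have "n - nk d (Suc k) = d * (dparent d n - nk d k) + (n - 3) mod d"
    using assms dparent_mult_add_mod[of d n] nk_Suc[of d k] by (simp add: diff_mult_distrib2)
  then show ?thesis
    by (simp add: algebra_simps)
qed

lemma lbl_Suc_0:
  assumes "2 \<le> d" "nk d (Suc k) \<le> n"
  shows "lbl d (Suc k) n 0 = (n - 3) mod d"
  unfolding lbl_def lbl_offset_Suc[OF assms] by simp

lemma lbl_Suc_Suc:
  assumes "2 \<le> d" "nk d (Suc k) \<le> n"
  shows "lbl d (Suc k) n (Suc i) = lbl d k (dparent d n) i"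
  using assms unfolding lbl_def lbl_offset_Suc[OF assms] by (simp add: div_mult2_eq)

definition delta_closed_form :: "nat \<Rightarrow> nat \<Rightarrow> real \<Rightarrow> nat \<Rightarrow> real" where
  "delta_closed_form d k q n =
     (\<Sum>i\<le>k. real (d ^ i) * q ^ (2 * i + 1))
   + (\<Sum>i < (if n < mk d k then k else Suc k). real (d ^ i) * real (lbl d k n i + 1) * q ^ (2 * i + 2))"

lemma delta_closed_form_0:
  assumes "2 \<le> d" "2 \<le> n" "n < d + 3"
  shows "delta_closed_form d 0 q n = q + real (n - 2) * q\<^sup>2"
proof -
  have "nk d 0 = 2" "mk d 0 = 3"
    by (simp_all add: nk_def mk_def)
  show ?thesis
  proof (cases "n = 2")
    case False
    have "lbl d 0 n 0 = (n - 3 + d) mod d"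
      using \<open>nk d 0 = 2\<close> assms False by (simp add: lbl_def)
    also have "\<dots> = n - 3"
      using assms by simp
    finally show ?thesis
      using \<open>mk d 0 = 3\<close> assms False
      by (simp add: delta_closed_form_def power2_eq_square)
  qed (simp add: delta_closed_form_def \<open>mk d 0 = 3\<close>)
qed

lemma delta_closed_form_Suc:
  assumes "2 \<le> d" "nk d (Suc k) \<le> n"
  shows "delta_closed_form d (Suc k) q n =
    q + real ((n - 3) mod d + 1) * q\<^sup>2 + real d * q\<^sup>2 * delta_closed_form d k q (dparent d n)"
proof -
  let ?K = "if dparent d n < mk d k then k else Suc k"
  have K: "(if n < mk d (Suc k) then Suc k else Suc (Suc k)) = Suc ?K"
    using dparent_less_mk_iff[OF assms] by simp
  have "(\<Sum>i\<le>Suc k. real (d ^ i) * q ^ (2 * i + 1)) =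
      q + real d * q\<^sup>2 * (\<Sum>i\<le>k. real (d ^ i) * q ^ (2 * i + 1))"
    unfolding sum.atMost_Suc_shift by (simp add: sum_distrib_left power2_eq_square algebra_simps)
  moreover have "(\<Sum>i<Suc ?K. real (d ^ i) * real (lbl d (Suc k) n i + 1) * q ^ (2 * i + 2)) =
      real ((n - 3) mod d + 1) * q\<^sup>2
      + real d * q\<^sup>2 * (\<Sum>i<?K. real (d ^ i) * real (lbl d k (dparent d n) i + 1) * q ^ (2 * i + 2))"
    unfolding sum.lessThan_Suc_shift
    by (simp add: sum_distrib_left lbl_Suc_0[OF assms] lbl_Suc_Suc[OF assms] power2_eq_square algebra_simps)
  ultimately show ?thesis
    unfolding delta_closed_form_def K by (simp add: distrib_left)
qed

lemma pred_dist_poly_eq_delta_closed_form: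
  assumes d: "2 \<le> d" and "nk d k \<le> n" "n < nk d (Suc k)"
  shows "pred_dist_poly d q n = delta_closed_form d k q n"
  using assms(2,3)
proof (induction k arbitrary: n)
  case 0
  then have n: "2 \<le> n" "n < d + 3"
    using nk_Suc[OF d, of 0] by (simp_all add: nk_def)
  then have "dparent d n = 1"
    using dparent_eq_iff[OF d n(1), of 1] by simp
  then show ?case
    using pred_dist_poly_child_of_root[OF d n(1)] delta_closed_form_0[OF d n] by simp
next
  case (Suc k)
  have n: "3 \<le> n" "2 \<le> n"
    using Suc.prems(1) nk_Suc_ge[OF d, of k] by simp_all
  have "pred_dist_poly d q (dparent d n) = delta_closed_form d k q (dparent d n)"
    using Suc.IH nk_le_dparent[OF d Suc.prems(1)] dparent_less_nk[OF d Suc.prems] by simp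
  moreover have "n + d - 2 - d * dparent d n = (n - 3) mod d + 1"
    using dparent_mult_add_mod[of d n] d n by simp
  ultimately show ?case
    using pred_dist_poly_rec[OF d n(2), of q] delta_closed_form_Suc[OF d Suc.prems(1)] by simp
qed

theorem lemma2p1:
  fixes d n k :: nat and q :: real
  assumes "d \<ge> 2" and "n \<ge> 2" and "nk d k \<le> n" and "n < nk d (Suc k)"
  shows "WD d n q - WD d (n - 1) q =
           (\<Sum>i\<le>k. real (d ^ i) * q ^ (2 * i + 1))
         + (\<Sum>i < (if n < mk d k then k else Suc k).
              real (d ^ i) * real (lbl d k n i + 1) * q ^ (2 * i + 2))"
proof -
  have "WD d n q - WD d (n - 1) q = pred_dist_poly d q n"
    using WD_diff_eq_pred_dist_poly[OF assms(1)] assms(2) by simp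
  also have "\<dots> = delta_closed_form d k q n"
    using pred_dist_poly_eq_delta_closed_form[OF assms(1,3,4)] .
  finally show ?thesis
    unfolding delta_closed_form_def .
qed

end
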